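(* Suppose $\mathcal C$ has a parameterized natural number object. If $P:\mathcal C^{op}\to\mathbf{InfSL}$ is a weak hyperdoctrine with full weak comprehensions and comprehensive diagonals, then $P$ is arithmetic, i.e. the parameterized natural number object satisfies induction in $P$.
   Context: A parameterized natural number object is $(\mathbf N,0:1\to\mathbf N,s:\mathbf N\to\mathbf N)$ such that for all $a:A\to X$, $f:X\to X$ there is a unique $k:A\times\mathbf N\to X$ with $k\langle\mathrm{id}_A,0\rangle=a$ and $k(\mathrm{id}_A\times s)=fk$. It satisfies induction in $P$ if for all $A$ and $\phi\in P(A\times\mathbf N)$, whenever $a:A\vdash\phi(a,0)$ and $a:A,m:\mathbf N\mid\phi(a,m)\vdash\phi(a,s(m))$, then $a:A,n:\mathbf N\vdash\phi(a,n)$. A weak hyperdoctrine is an elementary doctrine (with equality predicates $\delta_A$, written $=_A$) over a weakly cartesian closed base, with Heyting fibres and reindexing, and left and right adjoints to reindexing along product projections satisfying Beck–Chevalley; it is arithmetic if its base has a parameterized natural number object satisfying induction. A weak comprehension of $\alpha\in P(A)$ is an arrow $\{\alpha\}:X\to A$ with $\top\le P_{\{\alpha\}}(\alpha)$ through which every $f:Z\to A$ with $\top\le P_f(\alpha)$ factors (not necessarily uniquely); $P$ has full weak comprehensions if every $\alpha$ has one and $\alpha\le\beta$ whenever $\{\alpha\}$ factors through $\{\beta\}$. Comprehensive diagonals: $f=g$ whenever $\top\vdash f(x)=_Yg(x)$. *)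

theory Defs
  imports Main
begin

text \<open>A category with chosen finite products, presented by a set of objects,
a set of arrows, domain/codomain, composition (cmp g f = g o f), identities,
a chosen terminal object with unique arrows to it, and chosen binary products
with projections and pairing.\<close>

record ('o, 'm) cat =
  c_ob   :: "'o set"
  c_arr  :: "'m set"
  c_dom  :: "'m \<Rightarrow> 'o"
  c_cod  :: "'m \<Rightarrow> 'o"
  c_cmp  :: "'m \<Rightarrow> 'm \<Rightarrow> 'm"
  c_id   :: "'o \<Rightarrow> 'm"
  c_term :: "'o"
  c_bang :: "'o \<Rightarrow> 'm"
  c_prod :: "'o \<Rightarrow> 'o \<Rightarrow> 'o"
  c_p1   :: "'o \<Rightarrow> 'o \<Rightarrow> 'm"
  c_p2   :: "'o \<Rightarrow> 'o \<Rightarrow> 'm"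
  c_pair :: "'m \<Rightarrow> 'm \<Rightarrow> 'm"

definition hom :: "('o, 'm) cat \<Rightarrow> 'o \<Rightarrow> 'o \<Rightarrow> 'm set" where
  "hom C A B = {f \<in> c_arr C. c_dom C f = A \<and> c_cod C f = B}"

definition category :: "('o, 'm) cat \<Rightarrow> bool" where
  "category C \<longleftrightarrow>
     (\<forall>f\<in>c_arr C. c_dom C f \<in> c_ob C \<and> c_cod C f \<in> c_ob C) \<and>
     (\<forall>A\<in>c_ob C. c_id C A \<in> hom C A A) \<and>
     (\<forall>f\<in>c_arr C. \<forall>g\<in>c_arr C. c_cod C f = c_dom C g \<longrightarrow>
         c_cmp C g f \<in> hom C (c_dom C f) (c_cod C g)) \<and>
     (\<forall>f\<in>c_arr C. c_cmp C f (c_id C (c_dom C f)) = f \<and> c_cmp C (c_id C (c_cod C f)) f = f) \<and>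
     (\<forall>f\<in>c_arr C. \<forall>g\<in>c_arr C. \<forall>h\<in>c_arr C.
         c_cod C f = c_dom C g \<longrightarrow> c_cod C g = c_dom C h \<longrightarrow>
         c_cmp C h (c_cmp C g f) = c_cmp C (c_cmp C h g) f)"

definition cartesian :: "('o, 'm) cat \<Rightarrow> bool" where
  "cartesian C \<longleftrightarrow>
     c_term C \<in> c_ob C \<and>
     (\<forall>A\<in>c_ob C. c_bang C A \<in> hom C A (c_term C) \<and>
        (\<forall>f\<in>hom C A (c_term C). f = c_bang C A)) \<and>
     (\<forall>A\<in>c_ob C. \<forall>B\<in>c_ob C.
        c_prod C A B \<in> c_ob C \<and>
        c_p1 C A B \<in> hom C (c_prod C A B) A \<and>
        c_p2 C A B \<in> hom C (c_prod C A B) B \<and>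
        (\<forall>X\<in>c_ob C. \<forall>f\<in>hom C X A. \<forall>g\<in>hom C X B.
           c_pair C f g \<in> hom C X (c_prod C A B) \<and>
           c_cmp C (c_p1 C A B) (c_pair C f g) = f \<and>
           c_cmp C (c_p2 C A B) (c_pair C f g) = g \<and>
           (\<forall>h\<in>hom C X (c_prod C A B).
              c_cmp C (c_p1 C A B) h = f \<and> c_cmp C (c_p2 C A B) h = g \<longrightarrow> h = c_pair C f g)))"

definition tms :: "('o, 'm) cat \<Rightarrow> 'm \<Rightarrow> 'm \<Rightarrow> 'm" where
  "tms C f g = c_pair C (c_cmp C f (c_p1 C (c_dom C f) (c_dom C g)))
                        (c_cmp C g (c_p2 C (c_dom C f) (c_dom C g)))"

definition weakly_cartesian_closed :: "('o, 'm) cat \<Rightarrow> bool" where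
  "weakly_cartesian_closed C \<longleftrightarrow> category C \<and> cartesian C \<and>
     (\<forall>A\<in>c_ob C. \<forall>B\<in>c_ob C. \<exists>E\<in>c_ob C. \<exists>ev\<in>hom C (c_prod C E A) B.
        \<forall>X\<in>c_ob C. \<forall>f\<in>hom C (c_prod C X A) B. \<exists>g\<in>hom C X E.
           c_cmp C ev (tms C g (c_id C A)) = f)"

definition pnno :: "('o, 'm) cat \<Rightarrow> 'o \<Rightarrow> 'm \<Rightarrow> 'm \<Rightarrow> bool" where
  "pnno C N z s \<longleftrightarrow> N \<in> c_ob C \<and> z \<in> hom C (c_term C) N \<and> s \<in> hom C N N \<and>
     (\<forall>A\<in>c_ob C. \<forall>X\<in>c_ob C. \<forall>a\<in>hom C A X. \<forall>f\<in>hom C X X.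
        \<exists>!k. k \<in> hom C (c_prod C A N) X \<and>
             c_cmp C k (c_pair C (c_id C A) (c_cmp C z (c_bang C A))) = a \<and>
             c_cmp C k (tms C (c_id C A) s) = c_cmp C f k)"

text \<open>A doctrine P : C^op \<rightarrow> InfSL with Heyting fibres, presented by the
fibres P(A) (sets of predicates, ordered by le A), the reindexing maps
P_f = re f, the Heyting operations, equality predicates delta A \<in> P(A \<times> A),
and the quantifiers ex A B, all A B : P(A \<times> B) \<rightarrow> P(A) along the projection
A \<times> B \<rightarrow> A.\<close>

record ('o, 'm, 'p) doctrine =
  d_pr    :: "'o \<Rightarrow> 'p set"
  d_le    :: "'o \<Rightarrow> 'p \<Rightarrow> 'p \<Rightarrow> bool"
  d_re    :: "'m \<Rightarrow> 'p \<Rightarrow> 'p"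
  d_top   :: "'o \<Rightarrow> 'p"
  d_bot   :: "'o \<Rightarrow> 'p"
  d_meet  :: "'o \<Rightarrow> 'p \<Rightarrow> 'p \<Rightarrow> 'p"
  d_join  :: "'o \<Rightarrow> 'p \<Rightarrow> 'p \<Rightarrow> 'p"
  d_imp   :: "'o \<Rightarrow> 'p \<Rightarrow> 'p \<Rightarrow> 'p"
  d_delta :: "'o \<Rightarrow> 'p"
  d_ex    :: "'o \<Rightarrow> 'o \<Rightarrow> 'p \<Rightarrow> 'p"
  d_all   :: "'o \<Rightarrow> 'o \<Rightarrow> 'p \<Rightarrow> 'p"

definition heyting_fibres :: "('o, 'm) cat \<Rightarrow> ('o, 'm, 'p) doctrine \<Rightarrow> bool" where
  "heyting_fibres C P \<longleftrightarrow>
     (\<forall>A\<in>c_ob C.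
        (\<forall>x\<in>d_pr P A. d_le P A x x) \<and>
        (\<forall>x\<in>d_pr P A. \<forall>y\<in>d_pr P A. \<forall>w\<in>d_pr P A.
            d_le P A x y \<longrightarrow> d_le P A y w \<longrightarrow> d_le P A x w) \<and>
        (\<forall>x\<in>d_pr P A. \<forall>y\<in>d_pr P A. d_le P A x y \<longrightarrow> d_le P A y x \<longrightarrow> x = y) \<and>
        d_top P A \<in> d_pr P A \<and> d_bot P A \<in> d_pr P A \<and>
        (\<forall>x\<in>d_pr P A. d_le P A x (d_top P A) \<and> d_le P A (d_bot P A) x) \<and>
        (\<forall>x\<in>d_pr P A. \<forall>y\<in>d_pr P A.
           d_meet P A x y \<in> d_pr P A \<and> d_join P A x y \<in> d_pr P A \<and> d_imp P A x y \<in> d_pr P A \<and>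
           (\<forall>w\<in>d_pr P A.
              (d_le P A w (d_meet P A x y) \<longleftrightarrow> d_le P A w x \<and> d_le P A w y) \<and>
              (d_le P A (d_join P A x y) w \<longleftrightarrow> d_le P A x w \<and> d_le P A y w) \<and>
              (d_le P A (d_meet P A w x) y \<longleftrightarrow> d_le P A w (d_imp P A x y)))))"

definition reindexing_functor :: "('o, 'm) cat \<Rightarrow> ('o, 'm, 'p) doctrine \<Rightarrow> bool" where
  "reindexing_functor C P \<longleftrightarrow>
     (\<forall>A\<in>c_ob C. \<forall>B\<in>c_ob C. \<forall>f\<in>hom C A B.
        (\<forall>x\<in>d_pr P B. d_re P f x \<in> d_pr P A) \<and>
        (\<forall>x\<in>d_pr P B. \<forall>y\<in>d_pr P B. d_le P B x y \<longrightarrow> d_le P A (d_re P f x) (d_re P f y)) \<and>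
        d_re P f (d_top P B) = d_top P A \<and>
        d_re P f (d_bot P B) = d_bot P A \<and>
        (\<forall>x\<in>d_pr P B. \<forall>y\<in>d_pr P B.
           d_re P f (d_meet P B x y) = d_meet P A (d_re P f x) (d_re P f y) \<and>
           d_re P f (d_join P B x y) = d_join P A (d_re P f x) (d_re P f y) \<and>
           d_re P f (d_imp P B x y) = d_imp P A (d_re P f x) (d_re P f y))) \<and>
     (\<forall>A\<in>c_ob C. \<forall>x\<in>d_pr P A. d_re P (c_id C A) x = x) \<and>
     (\<forall>A\<in>c_ob C. \<forall>B\<in>c_ob C. \<forall>D\<in>c_ob C. \<forall>f\<in>hom C A B. \<forall>g\<in>hom C B D. \<forall>x\<in>d_pr P D.
        d_re P (c_cmp C g f) x = d_re P f (d_re P g x))"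

text \<open>Elementary structure (Maietti--Rosolini): delta A \<in> P(A \<times> A) with
(i) top \<le> P_<id,id>(delta A);
(ii) for alpha \<in> P(X \<times> A), working in P((X \<times> A) \<times> A):
     P_<p1,p2>(alpha) \<and> P_<p2,p3>(delta A) \<le> P_<p1,p3>(alpha);
(iii) delta A \<boxtimes> delta B \<le> delta (A \<times> B).\<close>
definition elementary :: "('o, 'm) cat \<Rightarrow> ('o, 'm, 'p) doctrine \<Rightarrow> bool" where
  "elementary C P \<longleftrightarrow>
     (\<forall>A\<in>c_ob C. d_delta P A \<in> d_pr P (c_prod C A A) \<and>
        d_le P A (d_top P A) (d_re P (c_pair C (c_id C A) (c_id C A)) (d_delta P A))) \<and>
     (\<forall>X\<in>c_ob C. \<forall>A\<in>c_ob C. \<forall>\<alpha>\<in>d_pr P (c_prod C X A).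
        (let XAA = c_prod C (c_prod C X A) A;
             q1 = c_p1 C (c_prod C X A) A;
             q2 = c_p2 C (c_prod C X A) A;
             p1 = c_cmp C (c_p1 C X A) q1;
             p2 = c_cmp C (c_p2 C X A) q1
         in d_le P XAA
              (d_meet P XAA (d_re P q1 \<alpha>) (d_re P (c_pair C p2 q2) (d_delta P A)))
              (d_re P (c_pair C p1 q2) \<alpha>))) \<and>
     (\<forall>A\<in>c_ob C. \<forall>B\<in>c_ob C.
        (let AB = c_prod C A B;
             ABAB = c_prod C AB AB;
             l = c_p1 C AB AB;
             r = c_p2 C AB AB;
             uA = c_pair C (c_cmp C (c_p1 C A B) l) (c_cmp C (c_p1 C A B) r);
             uB = c_pair C (c_cmp C (c_p2 C A B) l) (c_cmp C (c_p2 C A B) r)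
         in d_le P ABAB (d_meet P ABAB (d_re P uA (d_delta P A)) (d_re P uB (d_delta P B)))
              (d_delta P AB)))"

definition quantifiers :: "('o, 'm) cat \<Rightarrow> ('o, 'm, 'p) doctrine \<Rightarrow> bool" where
  "quantifiers C P \<longleftrightarrow>
     (\<forall>A\<in>c_ob C. \<forall>B\<in>c_ob C. \<forall>\<beta>\<in>d_pr P (c_prod C A B).
        d_ex P A B \<beta> \<in> d_pr P A \<and> d_all P A B \<beta> \<in> d_pr P A \<and>
        (\<forall>\<alpha>\<in>d_pr P A.
           (d_le P A (d_ex P A B \<beta>) \<alpha> \<longleftrightarrow> d_le P (c_prod C A B) \<beta> (d_re P (c_p1 C A B) \<alpha>)) \<and>
           (d_le P A \<alpha> (d_all P A B \<beta>) \<longleftrightarrow> d_le P (c_prod C A B) (d_re P (c_p1 C A B) \<alpha>) \<beta>)) \<and>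
        (\<forall>A'\<in>c_ob C. \<forall>f\<in>hom C A' A.
           d_re P f (d_ex P A B \<beta>) = d_ex P A' B (d_re P (tms C f (c_id C B)) \<beta>) \<and>
           d_re P f (d_all P A B \<beta>) = d_all P A' B (d_re P (tms C f (c_id C B)) \<beta>)))"

definition weak_hyperdoctrine :: "('o, 'm) cat \<Rightarrow> ('o, 'm, 'p) doctrine \<Rightarrow> bool" where
  "weak_hyperdoctrine C P \<longleftrightarrow> weakly_cartesian_closed C \<and> heyting_fibres C P \<and>
     reindexing_functor C P \<and> elementary C P \<and> quantifiers C P"

definition weak_comprehension :: "('o, 'm) cat \<Rightarrow> ('o, 'm, 'p) doctrine \<Rightarrow> 'o \<Rightarrow> 'p \<Rightarrow> 'm \<Rightarrow> bool" where
  "weak_comprehension C P A \<alpha> c \<longleftrightarrow> c \<in> c_arr C \<and> c_cod C c = A \<and>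
     d_le P (c_dom C c) (d_top P (c_dom C c)) (d_re P c \<alpha>) \<and>
     (\<forall>Z\<in>c_ob C. \<forall>f\<in>hom C Z A. d_le P Z (d_top P Z) (d_re P f \<alpha>) \<longrightarrow>
        (\<exists>h\<in>hom C Z (c_dom C c). c_cmp C c h = f))"

definition full_weak_comprehensions :: "('o, 'm) cat \<Rightarrow> ('o, 'm, 'p) doctrine \<Rightarrow> bool" where
  "full_weak_comprehensions C P \<longleftrightarrow>
     (\<forall>A\<in>c_ob C. \<forall>\<alpha>\<in>d_pr P A. \<exists>c. weak_comprehension C P A \<alpha> c) \<and>
     (\<forall>A\<in>c_ob C. \<forall>\<alpha>\<in>d_pr P A. \<forall>\<beta>\<in>d_pr P A. \<forall>c d.
        weak_comprehension C P A \<alpha> c \<longrightarrow> weak_comprehension C P A \<beta> d \<longrightarrow>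
        (\<exists>h\<in>hom C (c_dom C c) (c_dom C d). c_cmp C d h = c) \<longrightarrow> d_le P A \<alpha> \<beta>)"

definition comprehensive_diagonals :: "('o, 'm) cat \<Rightarrow> ('o, 'm, 'p) doctrine \<Rightarrow> bool" where
  "comprehensive_diagonals C P \<longleftrightarrow>
     (\<forall>X\<in>c_ob C. \<forall>Y\<in>c_ob C. \<forall>f\<in>hom C X Y. \<forall>g\<in>hom C X Y.
        d_le P X (d_top P X) (d_re P (c_pair C f g) (d_delta P Y)) \<longrightarrow> f = g)"

definition satisfies_induction ::
  "('o, 'm) cat \<Rightarrow> ('o, 'm, 'p) doctrine \<Rightarrow> 'o \<Rightarrow> 'm \<Rightarrow> 'm \<Rightarrow> bool" where
  "satisfies_induction C P N z s \<longleftrightarrow>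
     (\<forall>A\<in>c_ob C. \<forall>\<phi>\<in>d_pr P (c_prod C A N).
        d_le P A (d_top P A) (d_re P (c_pair C (c_id C A) (c_cmp C z (c_bang C A))) \<phi>) \<longrightarrow>
        d_le P (c_prod C A N) \<phi> (d_re P (tms C (c_id C A) s) \<phi>) \<longrightarrow>
        d_le P (c_prod C A N) (d_top P (c_prod C A N)) \<phi>)"

end

theory Submission
  imports Defs
begin

text \<open>Let \<open>c : X \<rightarrow> A \<times> N\<close> be a weak comprehension of \<open>\<phi>\<close>. The base case factors
\<open>\<langle>id, 0\<rangle>\<close> through \<open>c\<close> as some \<open>a\<close>, and the step case factors \<open>(id \<times> s) c\<close> through \<open>c\<close>
as \<open>c f\<close>. Recursion on \<open>a\<close> and \<open>f\<close> gives \<open>k : A \<times> N \<rightarrow> X\<close>; then \<open>c k\<close> satisfies the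
recursion equations for \<open>\<langle>id, 0\<rangle>\<close> and \<open>id \<times> s\<close>, as does the identity, so \<open>c k = id\<close> by
uniqueness. Reindexing \<open>\<top> \<le> P\<^sub>c(\<phi>)\<close> along \<open>k\<close> yields \<open>\<top> \<le> \<phi>\<close>.\<close>

lemma hom_cmp:
  "category C \<Longrightarrow> f \<in> hom C A B \<Longrightarrow> g \<in> hom C B D \<Longrightarrow> c_cmp C g f \<in> hom C A D"
  unfolding category_def hom_def by auto

lemma hom_id: "category C \<Longrightarrow> A \<in> c_ob C \<Longrightarrow> c_id C A \<in> hom C A A"
  unfolding category_def by auto

lemma cmp_assoc:
  "category C \<Longrightarrow> f \<in> hom C A B \<Longrightarrow> g \<in> hom C B D \<Longrightarrow> h \<in> hom C D E \<Longrightarrow>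
   c_cmp C h (c_cmp C g f) = c_cmp C (c_cmp C h g) f"
  unfolding category_def hom_def by auto

lemma cmp_id_left: "category C \<Longrightarrow> f \<in> hom C A B \<Longrightarrow> c_cmp C (c_id C B) f = f"
  unfolding category_def hom_def by auto

lemma cmp_id_right: "category C \<Longrightarrow> f \<in> hom C A B \<Longrightarrow> c_cmp C f (c_id C A) = f"
  unfolding category_def hom_def by auto

lemma arr_in_hom:
  "category C \<Longrightarrow> f \<in> c_arr C \<Longrightarrow> f \<in> hom C (c_dom C f) (c_cod C f) \<and> c_dom C f \<in> c_ob C"
  unfolding category_def hom_def by auto

lemma prod_ob: "cartesian C \<Longrightarrow> A \<in> c_ob C \<Longrightarrow> B \<in> c_ob C \<Longrightarrow> c_prod C A B \<in> c_ob C"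
  unfolding cartesian_def by auto

lemma hom_tms_id:
  assumes C: "category C" "cartesian C" and A: "A \<in> c_ob C" and B: "B \<in> c_ob C"
    and f: "f \<in> hom C B B"
  shows "tms C (c_id C A) f \<in> hom C (c_prod C A B) (c_prod C A B)"
proof -
  have dom: "c_dom C (c_id C A) = A" "c_dom C f = B"
    using hom_id[OF C(1) A] f unfolding hom_def by auto
  have "c_p1 C A B \<in> hom C (c_prod C A B) A" "c_p2 C A B \<in> hom C (c_prod C A B) B"
    using C(2) A B unfolding cartesian_def by auto
  then have "c_cmp C (c_id C A) (c_p1 C A B) \<in> hom C (c_prod C A B) A"
    and "c_cmp C f (c_p2 C A B) \<in> hom C (c_prod C A B) B"
    using hom_cmp[OF C(1)] hom_id[OF C(1) A] f by blast+
  then show ?thesis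
    unfolding tms_def dom using C(2) A B prod_ob[OF C(2) A B] unfolding cartesian_def by blast
qed

lemma hom_zero_pair:
  assumes C: "category C" "cartesian C" and A: "A \<in> c_ob C" and N: "N \<in> c_ob C"
    and z: "z \<in> hom C (c_term C) N"
  shows "c_pair C (c_id C A) (c_cmp C z (c_bang C A)) \<in> hom C A (c_prod C A N)"
proof -
  have "c_cmp C z (c_bang C A) \<in> hom C A N"
    using hom_cmp[OF C(1) _ z] C(2) A unfolding cartesian_def by blast
  then show ?thesis
    using C(2) A N hom_id[OF C(1) A] unfolding cartesian_def by blast
qed

lemma pnno_endo_eq_id:
  assumes C: "category C" "cartesian C" and nno: "pnno C N z s" and A: "A \<in> c_ob C"
    and k: "k \<in> hom C (c_prod C A N) (c_prod C A N)"
    and k_zero: "c_cmp C k (c_pair C (c_id C A) (c_cmp C z (c_bang C A))) =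
                 c_pair C (c_id C A) (c_cmp C z (c_bang C A))"
    and k_succ: "c_cmp C k (tms C (c_id C A) s) = c_cmp C (tms C (c_id C A) s) k"
  shows "k = c_id C (c_prod C A N)"
proof -
  let ?AN = "c_prod C A N" and ?e = "c_pair C (c_id C A) (c_cmp C z (c_bang C A))"
    and ?S = "tms C (c_id C A) s"
  have N: "N \<in> c_ob C" and z: "z \<in> hom C (c_term C) N" and s: "s \<in> hom C N N"
    using nno unfolding pnno_def by auto
  have AN: "?AN \<in> c_ob C" using prod_ob[OF C(2) A N] .
  have e: "?e \<in> hom C A ?AN" using hom_zero_pair[OF C A N z] .
  have S: "?S \<in> hom C ?AN ?AN" using hom_tms_id[OF C A N s] .
  have unique: "\<exists>!k. k \<in> hom C ?AN ?AN \<and> c_cmp C k ?e = ?e \<and> c_cmp C k ?S = c_cmp C ?S k"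
    using nno A AN e S unfolding pnno_def by blast
  have "c_id C ?AN \<in> hom C ?AN ?AN" "c_cmp C (c_id C ?AN) ?e = ?e"
    "c_cmp C (c_id C ?AN) ?S = c_cmp C ?S (c_id C ?AN)"
    using hom_id[OF C(1) AN] cmp_id_left[OF C(1) e] cmp_id_left[OF C(1) S]
      cmp_id_right[OF C(1) S] by simp_all
  then show ?thesis using unique k k_zero k_succ by blast
qed

lemma reindex_pr:
  "reindexing_functor C P \<Longrightarrow> A \<in> c_ob C \<Longrightarrow> B \<in> c_ob C \<Longrightarrow> f \<in> hom C A B \<Longrightarrow>
   \<alpha> \<in> d_pr P B \<Longrightarrow> d_re P f \<alpha> \<in> d_pr P A"
  unfolding reindexing_functor_def by blast

lemma reindex_mono:
  "reindexing_functor C P \<Longrightarrow> A \<in> c_ob C \<Longrightarrow> B \<in> c_ob C \<Longrightarrow> f \<in> hom C A B \<Longrightarrow>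
   \<alpha> \<in> d_pr P B \<Longrightarrow> \<beta> \<in> d_pr P B \<Longrightarrow> d_le P B \<alpha> \<beta> \<Longrightarrow> d_le P A (d_re P f \<alpha>) (d_re P f \<beta>)"
  unfolding reindexing_functor_def by blast

lemma reindex_top:
  "reindexing_functor C P \<Longrightarrow> A \<in> c_ob C \<Longrightarrow> B \<in> c_ob C \<Longrightarrow> f \<in> hom C A B \<Longrightarrow>
   d_re P f (d_top P B) = d_top P A"
  unfolding reindexing_functor_def by blast

lemma reindex_id:
  "reindexing_functor C P \<Longrightarrow> A \<in> c_ob C \<Longrightarrow> \<alpha> \<in> d_pr P A \<Longrightarrow> d_re P (c_id C A) \<alpha> = \<alpha>"
  unfolding reindexing_functor_def by blast

lemma reindex_cmp:
  "reindexing_functor C P \<Longrightarrow> A \<in> c_ob C \<Longrightarrow> B \<in> c_ob C \<Longrightarrow> D \<in> c_ob C \<Longrightarrow>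
   f \<in> hom C A B \<Longrightarrow> g \<in> hom C B D \<Longrightarrow> \<alpha> \<in> d_pr P D \<Longrightarrow>
   d_re P (c_cmp C g f) \<alpha> = d_re P f (d_re P g \<alpha>)"
  unfolding reindexing_functor_def by blast

lemma top_pr: "heyting_fibres C P \<Longrightarrow> A \<in> c_ob C \<Longrightarrow> d_top P A \<in> d_pr P A"
  unfolding heyting_fibres_def by blast

lemma valid_reindex:
  assumes R: "reindexing_functor C P" and H: "heyting_fibres C P"
    and A: "A \<in> c_ob C" and B: "B \<in> c_ob C" and f: "f \<in> hom C A B"
    and \<alpha>: "\<alpha> \<in> d_pr P B" and valid: "d_le P B (d_top P B) \<alpha>"
  shows "d_le P A (d_top P A) (d_re P f \<alpha>)"
  using reindex_mono[OF R A B f top_pr[OF H B] \<alpha> valid] reindex_top[OF R A B f] by simp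

lemma valid_mono:
  assumes "heyting_fibres C P" "A \<in> c_ob C" "\<alpha> \<in> d_pr P A" "\<beta> \<in> d_pr P A"
    and "d_le P A (d_top P A) \<alpha>" "d_le P A \<alpha> \<beta>"
  shows "d_le P A (d_top P A) \<beta>"
  using assms unfolding heyting_fibres_def by blast

lemma valid_through_section:
  assumes R: "reindexing_functor C P" and H: "heyting_fibres C P" and B: "B \<in> c_ob C"
    and X: "X \<in> c_ob C" and c: "c \<in> hom C X B" and k: "k \<in> hom C B X"
    and ck_id: "c_cmp C c k = c_id C B"
    and \<alpha>: "\<alpha> \<in> d_pr P B" and valid: "d_le P X (d_top P X) (d_re P c \<alpha>)"
  shows "d_le P B (d_top P B) \<alpha>"
proof -
  have "d_le P B (d_top P B) (d_re P k (d_re P c \<alpha>))"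
    using valid_reindex[OF R H B X k reindex_pr[OF R X B c \<alpha>] valid] .
  also have "d_re P k (d_re P c \<alpha>) = \<alpha>"
    using reindex_cmp[OF R B X B k c \<alpha>, symmetric] ck_id reindex_id[OF R B \<alpha>] by simp
  finally show ?thesis .
qed

lemma weak_comprehension_hom:
  assumes "category C" "weak_comprehension C P B \<phi> c"
  shows "c \<in> hom C (c_dom C c) B" "c_dom C c \<in> c_ob C"
  using assms arr_in_hom[of C c] unfolding weak_comprehension_def by auto

lemma weak_comprehension_valid:
  "weak_comprehension C P B \<phi> c \<Longrightarrow> d_le P (c_dom C c) (d_top P (c_dom C c)) (d_re P c \<phi>)"
  unfolding weak_comprehension_def by blast

lemma weak_comprehension_factor:
  assumes "weak_comprehension C P B \<phi> c" "Z \<in> c_ob C" "f \<in> hom C Z B"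
    and "d_le P Z (d_top P Z) (d_re P f \<phi>)"
  obtains h where "h \<in> hom C Z (c_dom C c)" "c_cmp C c h = f"
  using assms unfolding weak_comprehension_def by blast

lemma weak_comprehension_stable:
  assumes C: "category C" and H: "heyting_fibres C P" and R: "reindexing_functor C P"
    and B: "B \<in> c_ob C" and S: "S \<in> hom C B B" and \<phi>: "\<phi> \<in> d_pr P B"
    and step: "d_le P B \<phi> (d_re P S \<phi>)"
    and wc: "weak_comprehension C P B \<phi> c"
  obtains f where "f \<in> hom C (c_dom C c) (c_dom C c)" "c_cmp C c f = c_cmp C S c"
proof -
  let ?X = "c_dom C c"
  have c: "c \<in> hom C ?X B" and X: "?X \<in> c_ob C"
    using weak_comprehension_hom[OF C wc] by auto
  have S\<phi>: "d_re P S \<phi> \<in> d_pr P B" using reindex_pr[OF R B B S \<phi>] .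
  have "d_le P ?X (d_top P ?X) (d_re P c (d_re P S \<phi>))"
    using valid_mono[OF H X reindex_pr[OF R X B c \<phi>] reindex_pr[OF R X B c S\<phi>]
        weak_comprehension_valid[OF wc] reindex_mono[OF R X B c \<phi> S\<phi> step]] .
  then have "d_le P ?X (d_top P ?X) (d_re P (c_cmp C S c) \<phi>)"
    using reindex_cmp[OF R X B B c S \<phi>] by simp
  then show ?thesis
    using that weak_comprehension_factor[OF wc X hom_cmp[OF C c S]] by blast
qed

lemma inductive_comprehension_has_section:
  assumes C: "category C" "cartesian C" and H: "heyting_fibres C P"
    and R: "reindexing_functor C P" and nno: "pnno C N z s" and A: "A \<in> c_ob C"
    and \<phi>: "\<phi> \<in> d_pr P (c_prod C A N)"
    and base: "d_le P A (d_top P A) (d_re P (c_pair C (c_id C A) (c_cmp C z (c_bang C A))) \<phi>)"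
    and step: "d_le P (c_prod C A N) \<phi> (d_re P (tms C (c_id C A) s) \<phi>)"
    and wc: "weak_comprehension C P (c_prod C A N) \<phi> c"
  obtains k where "k \<in> hom C (c_prod C A N) (c_dom C c)"
    and "c_cmp C c k = c_id C (c_prod C A N)"
proof -
  let ?AN = "c_prod C A N" and ?e = "c_pair C (c_id C A) (c_cmp C z (c_bang C A))"
    and ?S = "tms C (c_id C A) s" and ?X = "c_dom C c"
  have N: "N \<in> c_ob C" and z: "z \<in> hom C (c_term C) N" and s: "s \<in> hom C N N"
    using nno unfolding pnno_def by auto
  have AN: "?AN \<in> c_ob C" using prod_ob[OF C(2) A N] .
  have e: "?e \<in> hom C A ?AN" using hom_zero_pair[OF C A N z] .
  have S: "?S \<in> hom C ?AN ?AN" using hom_tms_id[OF C A N s] .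
  have c: "c \<in> hom C ?X ?AN" and X: "?X \<in> c_ob C"
    using weak_comprehension_hom[OF C(1) wc] by auto
  obtain a where a: "a \<in> hom C A ?X" and ca: "c_cmp C c a = ?e"
    using weak_comprehension_factor[OF wc A e base] .
  obtain f where f: "f \<in> hom C ?X ?X" and cf: "c_cmp C c f = c_cmp C ?S c"
    using weak_comprehension_stable[OF C(1) H R AN S \<phi> step wc] .
  obtain k where k: "k \<in> hom C ?AN ?X" and ke: "c_cmp C k ?e = a"
    and kS: "c_cmp C k ?S = c_cmp C f k"
    using nno A X a f unfolding pnno_def by blast
  have "c_cmp C (c_cmp C c k) ?e = ?e"
    using cmp_assoc[OF C(1) e k c] ke ca by simp
  moreover have "c_cmp C (c_cmp C c k) ?S = c_cmp C ?S (c_cmp C c k)"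
    using cmp_assoc[OF C(1) S k c] cmp_assoc[OF C(1) k f c] cmp_assoc[OF C(1) k c S] kS cf
    by simp
  ultimately have "c_cmp C c k = c_id C ?AN"
    using pnno_endo_eq_id[OF C nno A hom_cmp[OF C(1) k c]] by blast
  then show ?thesis using that k by blast
qed

theorem proposition3p5:
  fixes C :: "('o, 'm) cat" and P :: "('o, 'm, 'p) doctrine"
    and N :: 'o and z :: 'm and s :: 'm
  assumes "pnno C N z s"
    and "weak_hyperdoctrine C P"
    and "full_weak_comprehensions C P"
    and "comprehensive_diagonals C P"
  shows "satisfies_induction C P N z s"
  unfolding satisfies_induction_def
proof (intro ballI impI)
  fix A \<phi>
  assume A: "A \<in> c_ob C" and \<phi>: "\<phi> \<in> d_pr P (c_prod C A N)"
    and base: "d_le P A (d_top P A) (d_re P (c_pair C (c_id C A) (c_cmp C z (c_bang C A))) \<phi>)"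
    and step: "d_le P (c_prod C A N) \<phi> (d_re P (tms C (c_id C A) s) \<phi>)"
  have C: "category C" "cartesian C" and H: "heyting_fibres C P" and R: "reindexing_functor C P"
    using assms(2) unfolding weak_hyperdoctrine_def weakly_cartesian_closed_def by auto
  have AN: "c_prod C A N \<in> c_ob C"
    using prod_ob[OF C(2) A] assms(1) unfolding pnno_def by blast
  obtain c where wc: "weak_comprehension C P (c_prod C A N) \<phi> c"
    using assms(3) AN \<phi> unfolding full_weak_comprehensions_def by blast
  obtain k where k: "k \<in> hom C (c_prod C A N) (c_dom C c)"
    and ck_id: "c_cmp C c k = c_id C (c_prod C A N)"
    using inductive_comprehension_has_section[OF C H R assms(1) A \<phi> base step wc] .
  show "d_le P (c_prod C A N) (d_top P (c_prod C A N)) \<phi>"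
    using valid_through_section[OF R H AN weak_comprehension_hom(2,1)[OF C(1) wc] k ck_id \<phi>
        weak_comprehension_valid[OF wc]] .
qed

end
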